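(* In the MLR-DMPC setting described in the context, let $k$ be a round. Suppose that for all $i\neq j$ with $i\notin\tilde{\mathcal A}_{ET}(k)$, $j\notin\tilde{\mathcal A}_{ET}(k)$, for all $\tilde p_j\in\mathcal D_j(k)$ and $\tilde p_i\in\mathcal D_i(k)$ and for all $h\in\{1,2,\dots,h_c\}$ $$\big\|\Theta^{-1}[\tilde p_j(hT_c+T|k-1)-\tilde p_i(hT_c+T|k-1)]\big\|_2\ge\hat d_{\min}.$$ Then for all such $i,j$, all $\tilde p_j\in\mathcal D_j(k+1)$ and $\tilde p_i\in\mathcal D_i(k+1)$, and all $h\in\{1,2,\dots,h_c\}$ $$\big\|\Theta^{-1}[\tilde p_j(hT_c|k)-\tilde p_i(hT_c|k)]\big\|_2\ge\hat d_{\min}.$$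
   Context: Setting (MLR-DMPC). There are $N$ UAVs indexed by $\mathcal A=\{1,\dots,N\}$ and $M$ compute units (CUs) indexed by $w\in\{1,\dots,M\}$, $1<M<N$. Rounds $k=0,1,\dots$ have length $T>0$; each consists of a computation phase followed by a communication phase where every device broadcasts at most one message and any message may be lost at any receiver. $\Theta$ is an invertible $3\times 3$ scaling matrix, $\hat d_{\min}>0$, $T_c>0$ with $T$ an integer multiple of $T_c$, $h_c\in\mathbb N$. Nominal model: $\dot{\hat x}_i=\hat f_i(\hat x_i,\hat u_i)$, position $\hat p_i=\hat g_{p,i}(\hat x_i)\in\mathbb R^3$. In round $k$ UAV $i$ follows reference $\hat x_i(\tau|k),\hat u_i(\tau|k)$ at time $kT+\tau$; if it receives in round $k$ a trajectory $\hat u_{i,w}(\cdot|k)$ from CU $w$, then $\hat u_i(\tau|k+1)=\hat u_{i,w}(\tau+T|k)$, else $\hat u_i(\tau|k+1)=\hat u_i(\tau+T|k)$ (a trajectory carried to the next round is the time-shift by $T$, i.e. $\tilde p_i(\cdot|k)=\tilde p_i(\cdot+T|k-1)$). Information trackers: each CU $w$ holds for each UAV $i$ a set $\mathcal D_{iw}(k)$ of candidate trajectories, written $\tilde x_i(\cdot|k-1),\tilde p_i(\cdot|k-1)$, flagged up-to-date or deprecated; it is updated each round from received messages: for each UAV whose metadata message was received, the tracker is reduced to the matching trajectory and marked up-to-date; if some tracker then has more than one element, or fewer than $M$ CU messages were received, all trackers are marked deprecated; every newly received CU trajectory for UAV $i$ is added to $\mathcal D_{iw}(k)$. $\mathcal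 D_i(k)$ denotes the common value of all non-deprecated trackers $\mathcal D_{iw}(k)$ (if all CUs are deprecated, the tracker of a virtual CU that receives all messages without loss and computes nothing). A CU with all trackers up-to-date selects, from a common set $\mathcal A_{ET}(k)$ of $M$ UAVs, one UAV and (if its tracker has exactly one element) computes and broadcasts a new trajectory for it; $\tilde{\mathcal A}_{ET}(k)\subseteq\mathcal A_{ET}(k)$ is the set of UAVs for which a new trajectory is computed in round $k$. *)

theory Defs
  imports "HOL-Analysis.Analysis"
begin

text \<open>Position trajectories: functions from (relative) time to positions in R^3.
  An element of the tracker D_i(k) is a candidate trajectory written
  p_i(. | k-1), i.e. expressed relative to the start of round k-1.\<close>
type_synonym traj = "real \<Rightarrow> real^3"

text \<open>Time shift by T: a trajectory carried to the next round,
  p(. | k) = p(. + T | k-1).\<close>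
definition tshift :: "real \<Rightarrow> traj \<Rightarrow> traj" where
  "tshift T p = (\<lambda>\<tau>. p (\<tau> + T))"

text \<open>newtraj k w i = Some q iff CU w computes (and broadcasts) in round k the
  new trajectory q for UAV i.  The set of UAVs for which a new trajectory is
  computed in round k (tilde A_ET(k)).\<close>
definition computed_set :: "(nat \<Rightarrow> nat \<Rightarrow> nat \<Rightarrow> traj option) \<Rightarrow> nat \<Rightarrow> nat set" where
  "computed_set newtraj k = {i. \<exists>w. newtraj k w i \<noteq> None}"

end

theory Submission
  imports Defs
begin

text \<open>A UAV for which no new trajectory is computed in round k keeps its candidate trajectories
  up to the time shift by T, and shifting both trajectories of a pair by T turns the separation
  at the times h Tc + T relative to round k - 1 into the separation at the times h Tc relative
  to round k.\<close>

lemma tshift_apply [simp]: "tshift T p t = p (t + T)"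
  by (simp add: tshift_def)

lemma not_in_computed_set_iff: "i \<notin> computed_set newtraj k \<longleftrightarrow> (\<forall>w. newtraj k w i = None)"
  by (simp add: computed_set_def)

lemma tracker_elem_is_shift_if_not_computed:
  assumes tracker_evol: "\<And>q. q \<in> D (Suc k) i \<Longrightarrow>
      (\<exists>p \<in> D k i. q = tshift T p) \<or> (\<exists>w. newtraj k w i = Some q)"
    and not_computed: "i \<notin> computed_set newtraj k"
    and q: "q \<in> D (Suc k) i"
  obtains p where "p \<in> D k i" and "q = tshift T p"
  using tracker_evol[OF q] not_computed by (auto simp: not_in_computed_set_iff)

theorem lemma4:
  fixes N M hc :: nat
    and T Tc dmin :: real
    and Theta :: "real^3^3"
    and D :: "nat \<Rightarrow> nat \<Rightarrow> traj set"
    and newtraj :: "nat \<Rightarrow> nat \<Rightarrow> nat \<Rightarrow> traj option"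
    and AET :: "nat \<Rightarrow> nat set"
    and k :: nat
  assumes M_bounds: "1 < M" "M < N"
    and T_pos: "T > 0" and Tc_pos: "Tc > 0"
    and T_mult: "\<exists>m::nat. T = real m * Tc"
    and dmin_pos: "dmin > 0"
    and Theta_inv: "invertible Theta"
    and AET_sub: "\<And>k'. AET k' \<subseteq> {1..N}" and AET_card: "\<And>k'. card (AET k') = M"
    and new_in_AET: "\<And>k' w i. newtraj k' w i \<noteq> None \<Longrightarrow> w \<in> {1..M} \<and> i \<in> AET k'"
    and new_one: "\<And>k' w i j. newtraj k' w i \<noteq> None \<Longrightarrow> newtraj k' w j \<noteq> None \<Longrightarrow> i = j"
    and tracker_evol: "\<And>k' i q. i \<in> {1..N} \<Longrightarrow> q \<in> D (Suc k') i \<Longrightarrow>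
          (\<exists>p \<in> D k' i. q = tshift T p) \<or> (\<exists>w. newtraj k' w i = Some q)"
    and hyp: "\<And>i j pi pj h. i \<in> {1..N} \<Longrightarrow> j \<in> {1..N} \<Longrightarrow> i \<noteq> j \<Longrightarrow>
          i \<notin> computed_set newtraj k \<Longrightarrow> j \<notin> computed_set newtraj k \<Longrightarrow>
          pj \<in> D k j \<Longrightarrow> pi \<in> D k i \<Longrightarrow> h \<in> {1..hc} \<Longrightarrow>
          norm (matrix_inv Theta *v (pj (real h * Tc + T) - pi (real h * Tc + T))) \<ge> dmin"
  shows "\<And>i j pi pj h. i \<in> {1..N} \<Longrightarrow> j \<in> {1..N} \<Longrightarrow> i \<noteq> j \<Longrightarrow>
          i \<notin> computed_set newtraj k \<Longrightarrow> j \<notin> computed_set newtraj k \<Longrightarrow>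
          pj \<in> D (Suc k) j \<Longrightarrow> pi \<in> D (Suc k) i \<Longrightarrow> h \<in> {1..hc} \<Longrightarrow>
          norm (matrix_inv Theta *v (pj (real h * Tc) - pi (real h * Tc))) \<ge> dmin"
proof -
  fix i j pi pj h
  assume i: "i \<in> {1..N}" and j: "j \<in> {1..N}" and "i \<noteq> j"
    and i_old: "i \<notin> computed_set newtraj k" and j_old: "j \<notin> computed_set newtraj k"
    and pj: "pj \<in> D (Suc k) j" and pi: "pi \<in> D (Suc k) i" and h: "h \<in> {1..hc}"
  obtain p where p: "p \<in> D k i" "pi = tshift T p"
    using tracker_elem_is_shift_if_not_computed[where D = D,
        OF tracker_evol[where k' = k, OF i] i_old pi] .
  obtain q where q: "q \<in> D k j" "pj = tshift T q"
    using tracker_elem_is_shift_if_not_computed[where D = D,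
        OF tracker_evol[where k' = k, OF j] j_old pj] .
  have "dmin \<le> norm (matrix_inv Theta *v (q (real h * Tc + T) - p (real h * Tc + T)))"
    using hyp[OF i j \<open>i \<noteq> j\<close> i_old j_old q(1) p(1) h] .
  then show "norm (matrix_inv Theta *v (pj (real h * Tc) - pi (real h * Tc))) \<ge> dmin"
    using p(2) q(2) by simp
qed

end
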